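(* Let $n\ge 3$ and let $C_n$ be the cycle on $n$ vertices. Then $$\tau(C_n)=\begin{cases}4 & \text{if } n\equiv 0 \pmod 4,\\ n & \text{if } n\equiv 1,3 \pmod 4,\\ \left(\frac n2\right)^2 & \text{if } n\equiv 2 \pmod 4.\end{cases}$$
   Context: A set $D \subseteq V(G)$ is a total dominating set of a graph $G$ if every vertex of $G$ has a neighbor in $D$. $\gamma_t(G)$ is the minimum cardinality of a total dominating set; a minimum one is a $\gamma_t(G)$-set, and $\tau(G)$ is the number of $\gamma_t(G)$-sets. *)

theory Defs
  imports Main
begin

definition total_dominating_set :: "'a set \<Rightarrow> ('a \<Rightarrow> 'a \<Rightarrow> bool) \<Rightarrow> 'a set \<Rightarrow> bool" where
  "total_dominating_set V E D \<longleftrightarrow> D \<subseteq> V \<and> (\<forall>v\<in>V. \<exists>u\<in>D. E v u)"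

definition total_domination_number :: "'a set \<Rightarrow> ('a \<Rightarrow> 'a \<Rightarrow> bool) \<Rightarrow> nat" where
  "total_domination_number V E = (LEAST k. \<exists>D. total_dominating_set V E D \<and> card D = k)"

definition min_tds :: "'a set \<Rightarrow> ('a \<Rightarrow> 'a \<Rightarrow> bool) \<Rightarrow> 'a set \<Rightarrow> bool" where
  "min_tds V E D \<longleftrightarrow> total_dominating_set V E D \<and> card D = total_domination_number V E"

definition num_min_tds :: "'a set \<Rightarrow> ('a \<Rightarrow> 'a \<Rightarrow> bool) \<Rightarrow> nat" where
  "num_min_tds V E = card {D. min_tds V E D}"

definition cycle_verts :: "nat \<Rightarrow> nat set" where
  "cycle_verts n = {0..<n}"

definition cycle_adj :: "nat \<Rightarrow> nat \<Rightarrow> nat \<Rightarrow> bool" where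
  "cycle_adj n i j \<longleftrightarrow> i < n \<and> j < n \<and> (j = (i + 1) mod n \<or> i = (j + 1) mod n)"

end

theory Submission
  imports Defs
begin

text \<open>A set D totally dominates C_n iff it meets every pair {u, u + 2 mod n}, since these are
the two neighbours of u + 1; so the total dominating sets of C_n are the vertex covers of the
graph with edges {u, u + 2}. For odd n this graph is again an n-cycle (relabel i as 2i mod n);
for n = 2m it is the disjoint union of two m-cycles, on the even and on the odd vertices.
A vertex cover of C_m has at least (m + 1) div 2 vertices, and the minimum ones are exactly the
sets of every second vertex starting from some a: for odd m these m sets are distinct, for even m
only two are. Hence tau(C_n) = n for odd n, and tau(C_2m) is the square of 2 or of m according
as m is even or odd.\<close>

definition forward_steps :: "nat \<Rightarrow> nat \<Rightarrow> nat \<Rightarrow> nat" where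
  "forward_steps m a i = (i + (m - a)) mod m"

lemma forward_steps_lt: "0 < m \<Longrightarrow> forward_steps m a i < m"
  by (simp add: forward_steps_def)

lemma forward_steps_Suc: "forward_steps m a (Suc i mod m) = Suc (forward_steps m a i) mod m"
  by (simp add: forward_steps_def mod_simps)

lemma forward_steps_self: "a \<le> m \<Longrightarrow> forward_steps m a a = 0"
  by (simp add: forward_steps_def)

lemma forward_steps_add: "a \<le> m \<Longrightarrow> t < m \<Longrightarrow> forward_steps m a ((a + t) mod m) = t"
proof -
  assume "a \<le> m" "t < m"
  then have "(a + t) + (m - a) = t + m" by simp
  then show ?thesis
    unfolding forward_steps_def by (metis mod_add_left_eq mod_add_self2 mod_less \<open>t < m\<close>)
qed

lemma add_forward_steps: "a < m \<Longrightarrow> i < m \<Longrightarrow> (a + forward_steps m a i) mod m = i"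
proof -
  assume "a < m" "i < m"
  then have "a + (i + (m - a)) = i + m" by simp
  then show ?thesis
    unfolding forward_steps_def by (metis mod_add_right_eq mod_add_self2 mod_less \<open>i < m\<close>)
qed

lemma bij_betw_forward_steps: "a < m \<Longrightarrow> bij_betw (forward_steps m a) {..<m} {..<m}"
  by (rule bij_betw_byWitness[where f' = "\<lambda>t. (a + t) mod m"])
    (auto simp: add_forward_steps forward_steps_add forward_steps_lt)

definition cycle_vertex_cover :: "nat \<Rightarrow> nat set \<Rightarrow> bool" where
  "cycle_vertex_cover m S \<longleftrightarrow> S \<subseteq> {..<m} \<and> (\<forall>i<m. i \<in> S \<or> Suc i mod m \<in> S)"

definition alternate_vertices :: "nat \<Rightarrow> nat \<Rightarrow> nat set" where
  "alternate_vertices m a = {i. i < m \<and> even (forward_steps m a i)}"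

lemma alternate_vertices_cover:
  assumes "a < m" shows "cycle_vertex_cover m (alternate_vertices m a)"
  unfolding cycle_vertex_cover_def alternate_vertices_def
proof (intro conjI allI impI)
  fix i assume "i < m"
  have "forward_steps m a i < m" using assms by (simp add: forward_steps_lt)
  then have "even (forward_steps m a i) \<or> even (Suc (forward_steps m a i) mod m)"
    by (cases "Suc (forward_steps m a i) = m") auto
  then show "i \<in> {i. i < m \<and> even (forward_steps m a i)} \<or>
      Suc i mod m \<in> {i. i < m \<and> even (forward_steps m a i)}"
    using \<open>i < m\<close> by (auto simp: forward_steps_Suc)
qed auto

lemma card_even_below: "card {t. t < m \<and> even t} = (m + 1) div 2"
proof (induction m)
  case (Suc m)
  have "{t. t < Suc m \<and> even t} = {t. t < m \<and> even t} \<union> (if even m then {m} else {})"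
    by (auto simp: less_Suc_eq)
  then show ?case using Suc by auto
qed simp

lemma card_alternate_vertices:
  assumes "a < m" shows "card (alternate_vertices m a) = (m + 1) div 2"
proof -
  have "bij_betw (forward_steps m a) (alternate_vertices m a) {t. t < m \<and> even t}"
    using bij_betw_forward_steps[OF assms]
    unfolding alternate_vertices_def bij_betw_def inj_on_def by (auto simp: image_iff)
  then show ?thesis by (simp add: bij_betw_same_card card_even_below)
qed

lemma bij_betw_Suc_mod: "bij_betw (\<lambda>i. Suc i mod m) {..<m} {..<m}"
proof (cases "m = 0")
  case False
  have "inj_on (\<lambda>i. Suc i mod m) {..<m}"
    by (auto simp: inj_on_def mod_Suc split: if_splits)
  moreover have "(\<lambda>i. Suc i mod m) ` {..<m} \<subseteq> {..<m}" using False by auto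
  ultimately show ?thesis unfolding bij_betw_def by (simp add: endo_inj_surj)
qed simp

lemma card_cycle_vertex_cover_doubles:
  assumes "cycle_vertex_cover m S"
  shows "card {i. i \<in> S \<and> Suc i mod m \<in> S} + m = 2 * card S"
proof -
  let ?P = "{i. i < m \<and> Suc i mod m \<in> S}"
  have S: "S \<subseteq> {..<m}" and fin: "finite S" using assms finite_subset
    by (auto simp: cycle_vertex_cover_def)
  have image: "(\<lambda>i. Suc i mod m) ` ?P = S"
  proof
    show "S \<subseteq> (\<lambda>i. Suc i mod m) ` ?P"
    proof
      fix s assume "s \<in> S"
      then have "s \<in> (\<lambda>i. Suc i mod m) ` {..<m}"
        using S bij_betw_imp_surj_on[OF bij_betw_Suc_mod, of m] by blast
      then show "s \<in> (\<lambda>i. Suc i mod m) ` ?P" using \<open>s \<in> S\<close> by auto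
    qed
  qed auto
  have "bij_betw (\<lambda>i. Suc i mod m) ?P S"
    using bij_betw_subset[OF bij_betw_Suc_mod _ image] by auto
  then have "card ?P = card S" by (rule bij_betw_same_card)
  moreover have "S \<union> ?P = {..<m}" using assms by (auto simp: cycle_vertex_cover_def)
  moreover have "S \<inter> ?P = {i. i \<in> S \<and> Suc i mod m \<in> S}" using S by auto
  ultimately show ?thesis using card_Un_Int[of S ?P] fin by simp
qed

lemma cycle_vertex_cover_card_ge: "cycle_vertex_cover m S \<Longrightarrow> (m + 1) div 2 \<le> card S"
  using card_cycle_vertex_cover_doubles[of m S] by linarith

lemma cycle_vertex_cover_alternates:
  assumes cover: "cycle_vertex_cover m S" and "a < m" "a \<in> S"
    and no_double: "\<And>t. t < l \<Longrightarrow> \<not> ((a + t) mod m \<in> S \<and> (a + Suc t) mod m \<in> S)"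
  shows "t \<le> l \<Longrightarrow> (a + t) mod m \<in> S \<longleftrightarrow> even t"
proof (induction t)
  case 0
  then show ?case using \<open>a < m\<close> \<open>a \<in> S\<close> by simp
next
  case (Suc t)
  have "(a + t) mod m \<in> S \<or> Suc ((a + t) mod m) mod m \<in> S"
    using cover \<open>a < m\<close> by (simp add: cycle_vertex_cover_def)
  then have "(a + t) mod m \<in> S \<or> (a + Suc t) mod m \<in> S"
    by (simp add: mod_Suc_eq)
  then show ?case using Suc no_double[of t] by auto
qed

lemma cycle_vertex_cover_eq_alternate_vertices:
  assumes cover: "cycle_vertex_cover m S" and a: "a < m" "a \<in> S"
    and doubles: "{i. i \<in> S \<and> Suc i mod m \<in> S} \<subseteq> {(a + (m - 1)) mod m}"
  shows "S = alternate_vertices m a"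
proof (rule set_eqI)
  have no_double: "\<not> ((a + t) mod m \<in> S \<and> (a + Suc t) mod m \<in> S)" if "t < m - 1" for t
  proof
    assume "(a + t) mod m \<in> S \<and> (a + Suc t) mod m \<in> S"
    then have "(a + t) mod m = (a + (m - 1)) mod m" using doubles by (auto simp: mod_Suc_eq)
    then have "t = m - 1"
      using forward_steps_add[of a m t] forward_steps_add[of a m "m - 1"] that a by simp
    then show False using that by simp
  qed
  fix i
  show "i \<in> S \<longleftrightarrow> i \<in> alternate_vertices m a"
  proof (cases "i < m")
    case True
    have "forward_steps m a i \<le> m - 1" using forward_steps_lt[of m a i] a by simp
    from cycle_vertex_cover_alternates[OF cover a no_double this] show ?thesis
      using True a by (simp add: add_forward_steps alternate_vertices_def)
  next
    case False
    then show ?thesis using cover by (auto simp: cycle_vertex_cover_def alternate_vertices_def)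
  qed
qed

lemma min_cycle_vertex_covers:
  assumes "0 < m"
  shows "{S. cycle_vertex_cover m S \<and> card S = (m + 1) div 2} = alternate_vertices m ` {..<m}"
proof (intro set_eqI iffI)
  fix S assume "S \<in> {S. cycle_vertex_cover m S \<and> card S = (m + 1) div 2}"
  then have cover: "cycle_vertex_cover m S" and card: "card S = (m + 1) div 2" by auto
  let ?D = "{i. i \<in> S \<and> Suc i mod m \<in> S}"
  have S: "S \<subseteq> {..<m}" using cover by (simp add: cycle_vertex_cover_def)
  have "card ?D = 0 \<or> card ?D = Suc 0" using card_cycle_vertex_cover_doubles[OF cover] card by linarith
  moreover have "finite ?D" using S by (auto intro: finite_subset[of _ "{..<m}"])
  ultimately consider "?D = {}" | j where "?D = {j}"
    by (auto simp: card_1_singleton_iff)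
  then obtain a where "a < m" "a \<in> S" "?D \<subseteq> {(a + (m - 1)) mod m}"
  proof cases
    case 1
    have "S \<noteq> {}" using card assms by auto
    then show thesis using that 1 S by blast
  next
    case (2 j)
    then have j: "j < m" "Suc j mod m \<in> S" using S by auto
    have "(Suc j mod m + (m - 1)) mod m = (Suc j + (m - 1)) mod m"
      by (rule mod_add_left_eq)
    also have "Suc j + (m - 1) = j + m" using j by simp
    finally have "(Suc j mod m + (m - 1)) mod m = j" using j by simp
    then show thesis using that[of "Suc j mod m"] j 2 assms by simp
  qed
  then show "S \<in> alternate_vertices m ` {..<m}"
    using cycle_vertex_cover_eq_alternate_vertices[OF cover] by blast
qed (auto simp: alternate_vertices_cover card_alternate_vertices)

lemma alternate_vertices_even:
  assumes "even m" "a < m"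
  shows "alternate_vertices m a = {i. i < m \<and> (even i \<longleftrightarrow> even a)}"
proof -
  have "even (forward_steps m a i) \<longleftrightarrow> (even i \<longleftrightarrow> even a)" for i
  proof -
    have "even (forward_steps m a i) \<longleftrightarrow> even (i + (m - a))"
      using assms(1) by (simp add: forward_steps_def even_iff_mod_2_eq_zero mod_mod_cancel)
    then show ?thesis using assms by auto
  qed
  then show ?thesis by (simp add: alternate_vertices_def)
qed

lemma alternate_vertices_double_iff:
  assumes "odd m" "a < m" "i < m"
  shows "i \<in> alternate_vertices m a \<and> Suc i mod m \<in> alternate_vertices m a \<longleftrightarrow> Suc i mod m = a"
proof
  assume double: "i \<in> alternate_vertices m a \<and> Suc i mod m \<in> alternate_vertices m a"
  have "forward_steps m a i < m" using assms forward_steps_lt by simp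
  moreover have "even (forward_steps m a i)" "even (Suc (forward_steps m a i) mod m)"
    using double by (auto simp: alternate_vertices_def forward_steps_Suc)
  ultimately have "forward_steps m a (Suc i mod m) = 0"
    by (cases "Suc (forward_steps m a i) = m") (auto simp: forward_steps_Suc)
  then show "Suc i mod m = a"
    using add_forward_steps[OF assms(2), of "Suc i mod m"] assms by simp
next
  assume "Suc i mod m = a"
  moreover have "Suc (forward_steps m a i) mod m = 0"
    using calculation forward_steps_Suc[of m a i] forward_steps_self[of a m] assms by simp
  then have "forward_steps m a i = m - 1"
    using forward_steps_lt[of m a i] assms by (cases "Suc (forward_steps m a i) < m") auto
  ultimately show "i \<in> alternate_vertices m a \<and> Suc i mod m \<in> alternate_vertices m a"
    using assms by (auto simp: alternate_vertices_def forward_steps_self)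
qed

lemma card_alternate_vertices_image:
  assumes "0 < m"
  shows "card (alternate_vertices m ` {..<m}) = (if even m then 2 else m)"
proof (cases "even m")
  case True
  then have "1 < m" using assms by presburger
  have "alternate_vertices m ` {..<m} = {alternate_vertices m 0, alternate_vertices m 1}"
  proof
    show "alternate_vertices m ` {..<m} \<subseteq> {alternate_vertices m 0, alternate_vertices m 1}"
      using True \<open>1 < m\<close> by (auto simp: alternate_vertices_even)
  qed (use \<open>1 < m\<close> in auto)
  moreover have "alternate_vertices m 0 \<noteq> alternate_vertices m 1"
    using True \<open>1 < m\<close> by (auto simp: alternate_vertices_even)
  ultimately show ?thesis using True by simp
next
  case False
  have "inj_on (alternate_vertices m) {..<m}"
  proof (rule inj_onI)
    fix a b assume "a \<in> {..<m}" "b \<in> {..<m}" "alternate_vertices m a = alternate_vertices m b"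
    moreover have "a \<in> (\<lambda>i. Suc i mod m) ` {..<m}"
      using \<open>a \<in> {..<m}\<close> bij_betw_imp_surj_on[OF bij_betw_Suc_mod, of m] by simp
    then obtain i where "i < m" "Suc i mod m = a" by blast
    ultimately show "a = b"
      using alternate_vertices_double_iff[OF False, of a i] alternate_vertices_double_iff[OF False, of b i]
      by auto
  qed
  then show ?thesis using False by (simp add: card_image)
qed

lemma card_min_cycle_vertex_covers:
  "0 < m \<Longrightarrow> card {S. cycle_vertex_cover m S \<and> card S = (m + 1) div 2} = (if even m then 2 else m)"
  by (simp only: min_cycle_vertex_covers card_alternate_vertices_image)

definition two_step_cover :: "nat \<Rightarrow> nat set \<Rightarrow> nat set \<Rightarrow> bool" where
  "two_step_cover n A T \<longleftrightarrow> T \<subseteq> A \<and> (\<forall>u\<in>A. u \<in> T \<or> (u + 2) mod n \<in> T)"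

lemma two_step_cover_image_iff:
  assumes bij: "bij_betw c {..<m} A"
    and step: "\<And>i. i < m \<Longrightarrow> c (Suc i mod m) = (c i + 2) mod n"
    and S: "S \<subseteq> {..<m}"
  shows "two_step_cover n A (c ` S) \<longleftrightarrow> cycle_vertex_cover m S"
proof -
  have A: "A = c ` {..<m}" using bij by (simp add: bij_betw_def)
  have mem: "c i \<in> c ` S \<longleftrightarrow> i \<in> S" if "i < m" for i
    using bij S that by (auto simp: bij_betw_def dest: inj_onD)
  have "two_step_cover n A (c ` S) \<longleftrightarrow> (\<forall>i<m. c i \<in> c ` S \<or> c (Suc i mod m) \<in> c ` S)"
    using S step by (auto simp: two_step_cover_def A)
  also have "\<dots> \<longleftrightarrow> cycle_vertex_cover m S"
    using S by (auto simp: cycle_vertex_cover_def mem)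
  finally show ?thesis .
qed

lemma two_step_covers_eq_image:
  assumes "bij_betw c {..<m} A" "\<And>i. i < m \<Longrightarrow> c (Suc i mod m) = (c i + 2) mod n"
  shows "{T. two_step_cover n A T \<and> card T = k} = image c ` {S. cycle_vertex_cover m S \<and> card S = k}"
proof -
  have inj: "inj_on c {..<m}" and A: "A = c ` {..<m}"
    using assms(1) by (auto simp: bij_betw_def)
  have card: "card (c ` S) = card S" if "cycle_vertex_cover m S" for S
    using that inj by (auto simp: cycle_vertex_cover_def card_image inj_on_subset)
  show ?thesis
  proof (intro set_eqI iffI)
    fix T assume T: "T \<in> {T. two_step_cover n A T \<and> card T = k}"
    define S where "S = {i. i < m \<and> c i \<in> T}"
    have "T = c ` S" using T A by (auto simp: S_def two_step_cover_def)
    moreover have "S \<subseteq> {..<m}" by (auto simp: S_def)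
    ultimately have "cycle_vertex_cover m S"
      using two_step_cover_image_iff[OF assms] T by auto
    then show "T \<in> image c ` {S. cycle_vertex_cover m S \<and> card S = k}"
      using T card \<open>T = c ` S\<close> by auto
  next
    fix T assume "T \<in> image c ` {S. cycle_vertex_cover m S \<and> card S = k}"
    then obtain S where "cycle_vertex_cover m S" "card S = k" "T = c ` S" by auto
    then show "T \<in> {T. two_step_cover n A T \<and> card T = k}"
      using two_step_cover_image_iff[OF assms, of S] card by (auto simp: cycle_vertex_cover_def)
  qed
qed

lemma two_step_cover_card_ge:
  assumes "bij_betw c {..<m} A" "\<And>i. i < m \<Longrightarrow> c (Suc i mod m) = (c i + 2) mod n"
    and "two_step_cover n A T"
  shows "(m + 1) div 2 \<le> card T"
proof -
  have "T \<in> image c ` {S. cycle_vertex_cover m S \<and> card S = card T}"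
    using two_step_covers_eq_image[OF assms(1,2), of "card T"] assms(3) by blast
  then obtain S where "cycle_vertex_cover m S" "card S = card T" by blast
  then show ?thesis using cycle_vertex_cover_card_ge by metis
qed

lemma card_min_two_step_covers:
  assumes "bij_betw c {..<m} A" "\<And>i. i < m \<Longrightarrow> c (Suc i mod m) = (c i + 2) mod n" "0 < m"
  shows "card {T. two_step_cover n A T \<and> card T = (m + 1) div 2} = (if even m then 2 else m)"
proof -
  have "inj_on (image c) {S. cycle_vertex_cover m S \<and> card S = (m + 1) div 2}"
    using inj_on_image_Pow[of c "{..<m}"] assms(1)
    by (auto simp: bij_betw_def cycle_vertex_cover_def intro: inj_on_subset)
  then show ?thesis
    using card_min_cycle_vertex_covers[OF assms(3)]
    by (simp add: two_step_covers_eq_image[OF assms(1,2)] card_image)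
qed

lemma card_eq_card_Int_add_card_Int:
  assumes "finite D" "D \<subseteq> A \<union> B" "A \<inter> B = {}"
  shows "card D = card (D \<inter> A) + card (D \<inter> B)"
proof -
  have "D - A = D \<inter> B" using assms by blast
  then show ?thesis using card_Int_Diff[OF assms(1), of A] by simp
qed

lemma card_min_sets_disjoint_Un:
  assumes disj: "A \<inter> B = {}" and fin: "finite A" "finite B"
    and P: "\<And>X. P X \<Longrightarrow> X \<subseteq> A \<and> k \<le> card X"
    and Q: "\<And>Y. Q Y \<Longrightarrow> Y \<subseteq> B \<and> l \<le> card Y"
  shows "card {D. D \<subseteq> A \<union> B \<and> P (D \<inter> A) \<and> Q (D \<inter> B) \<and> card D = k + l}
    = card {X. P X \<and> card X = k} * card {Y. Q Y \<and> card Y = l}"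
proof -
  let ?X = "{X. P X \<and> card X = k}" and ?Y = "{Y. Q Y \<and> card Y = l}"
  have split: "card D = card (D \<inter> A) + card (D \<inter> B)" if "D \<subseteq> A \<union> B" for D
    using card_eq_card_Int_add_card_Int[OF finite_subset[OF that] that disj] fin by simp
  have "{D. D \<subseteq> A \<union> B \<and> P (D \<inter> A) \<and> Q (D \<inter> B) \<and> card D = k + l}
      = (\<lambda>(X, Y). X \<union> Y) ` (?X \<times> ?Y)"
  proof (intro set_eqI iffI)
    fix D assume D: "D \<in> {D. D \<subseteq> A \<union> B \<and> P (D \<inter> A) \<and> Q (D \<inter> B) \<and> card D = k + l}"
    then have "card (D \<inter> A) = k" "card (D \<inter> B) = l"
      using P[of "D \<inter> A"] Q[of "D \<inter> B"] split[of D] by auto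
    moreover have "D = (D \<inter> A) \<union> (D \<inter> B)" using D by blast
    ultimately show "D \<in> (\<lambda>(X, Y). X \<union> Y) ` (?X \<times> ?Y)"
      using D by (auto intro!: image_eqI[where x = "(D \<inter> A, D \<inter> B)"])
  next
    fix D assume "D \<in> (\<lambda>(X, Y). X \<union> Y) ` (?X \<times> ?Y)"
    then obtain X Y where "P X" "Q Y" "card X = k" "card Y = l" "D = X \<union> Y" by auto
    moreover have "X \<subseteq> A" "Y \<subseteq> B" using P[of X] Q[of Y] calculation by auto
    moreover have "X \<union> Y \<subseteq> A \<union> B" "(X \<union> Y) \<inter> A = X" "(X \<union> Y) \<inter> B = Y"
      using calculation disj by auto
    ultimately show "D \<in> {D. D \<subseteq> A \<union> B \<and> P (D \<inter> A) \<and> Q (D \<inter> B) \<and> card D = k + l}"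
      using split[of D] by auto
  qed
  moreover have "inj_on (\<lambda>(X, Y). X \<union> Y) (?X \<times> ?Y)"
  proof (rule inj_onI, clarsimp)
    fix X Y X' Y' assume "P X" "Q Y" "P X'" "Q Y'" "X \<union> Y = X' \<union> Y'"
    moreover have "X \<subseteq> A" "X' \<subseteq> A" "Y \<subseteq> B" "Y' \<subseteq> B"
      using P[of X] P[of X'] Q[of Y] Q[of Y'] calculation by auto
    ultimately show "X = X' \<and> Y = Y'" using disj by blast
  qed
  ultimately show ?thesis by (simp add: card_image card_cartesian_product)
qed

lemma two_step_orbit_closed:
  assumes "bij_betw c {..<m} A" "\<And>i. i < m \<Longrightarrow> c (Suc i mod m) = (c i + 2) mod n" "u \<in> A"
  shows "(u + 2) mod n \<in> A"
proof -
  obtain i where "i < m" "u = c i"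
    using assms(1,3) by (auto simp: bij_betw_def)
  then have "(u + 2) mod n = c (Suc i mod m)" using assms(2) by simp
  moreover have "Suc i mod m \<in> {..<m}" using \<open>i < m\<close> by simp
  ultimately show ?thesis using bij_betw_apply[OF assms(1)] by simp
qed

lemma two_step_cover_Un_iff:
  assumes "\<And>u. u \<in> A \<Longrightarrow> (u + 2) mod n \<in> A" "\<And>u. u \<in> B \<Longrightarrow> (u + 2) mod n \<in> B"
  shows "two_step_cover n (A \<union> B) D \<longleftrightarrow>
    D \<subseteq> A \<union> B \<and> two_step_cover n A (D \<inter> A) \<and> two_step_cover n B (D \<inter> B)"
  using assms by (auto simp: two_step_cover_def)

lemma two_step_cover_Un_card_ge:
  assumes A: "bij_betw c {..<m} A" "\<And>i. i < m \<Longrightarrow> c (Suc i mod m) = (c i + 2) mod n"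
    and B: "bij_betw d {..<l} B" "\<And>i. i < l \<Longrightarrow> d (Suc i mod l) = (d i + 2) mod n"
    and disj: "A \<inter> B = {}" and D: "two_step_cover n (A \<union> B) D"
  shows "(m + 1) div 2 + (l + 1) div 2 \<le> card D"
proof -
  have split: "D \<subseteq> A \<union> B" "two_step_cover n A (D \<inter> A)" "two_step_cover n B (D \<inter> B)"
    using D two_step_cover_Un_iff[OF two_step_orbit_closed[OF A] two_step_orbit_closed[OF B]] by auto
  moreover have "finite (A \<union> B)" using bij_betw_finite[OF A(1)] bij_betw_finite[OF B(1)] by simp
  ultimately have "card D = card (D \<inter> A) + card (D \<inter> B)"
    using card_eq_card_Int_add_card_Int[OF _ _ disj] finite_subset by blast
  then show ?thesis
    using two_step_cover_card_ge[OF A split(2)] two_step_cover_card_ge[OF B split(3)] by simp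
qed

lemma card_min_two_step_covers_Un:
  assumes A: "bij_betw c {..<m} A" "\<And>i. i < m \<Longrightarrow> c (Suc i mod m) = (c i + 2) mod n"
    and B: "bij_betw d {..<l} B" "\<And>i. i < l \<Longrightarrow> d (Suc i mod l) = (d i + 2) mod n"
    and disj: "A \<inter> B = {}" and "0 < m" "0 < l"
  shows "card {D. two_step_cover n (A \<union> B) D \<and> card D = (m + 1) div 2 + (l + 1) div 2}
    = (if even m then 2 else m) * (if even l then 2 else l)"
proof -
  have "card {D. two_step_cover n (A \<union> B) D \<and> card D = (m + 1) div 2 + (l + 1) div 2}
      = card {D. D \<subseteq> A \<union> B \<and> two_step_cover n A (D \<inter> A) \<and> two_step_cover n B (D \<inter> B)
          \<and> card D = (m + 1) div 2 + (l + 1) div 2}"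
    using two_step_cover_Un_iff[OF two_step_orbit_closed[OF A] two_step_orbit_closed[OF B]]
    by (simp only: conj_assoc)
  also have "\<dots> = card {X. two_step_cover n A X \<and> card X = (m + 1) div 2}
        * card {Y. two_step_cover n B Y \<and> card Y = (l + 1) div 2}"
  proof (rule card_min_sets_disjoint_Un[OF disj])
    show "finite A" "finite B" using bij_betw_finite[OF A(1)] bij_betw_finite[OF B(1)] by simp_all
    show "X \<subseteq> A \<and> (m + 1) div 2 \<le> card X" if "two_step_cover n A X" for X
      using that two_step_cover_card_ge[OF A that] by (simp add: two_step_cover_def)
    show "Y \<subseteq> B \<and> (l + 1) div 2 \<le> card Y" if "two_step_cover n B Y" for Y
      using that two_step_cover_card_ge[OF B that] by (simp add: two_step_cover_def)
  qed
  finally show ?thesis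
    using card_min_two_step_covers[OF A \<open>0 < m\<close>] card_min_two_step_covers[OF B \<open>0 < l\<close>] by simp
qed

lemma total_dominating_set_cycle_iff:
  assumes "0 < n"
  shows "total_dominating_set (cycle_verts n) (cycle_adj n) D \<longleftrightarrow> two_step_cover n {..<n} D"
proof (cases "D \<subseteq> {..<n}")
  case True
  have neighbour: "(\<exists>u\<in>D. cycle_adj n v u) \<longleftrightarrow> Suc v mod n \<in> D \<or> (\<exists>u\<in>D. Suc u mod n = v)"
    if "v < n" for v
    using True that by (auto simp: cycle_adj_def)
  have "(\<forall>v<n. \<exists>u\<in>D. cycle_adj n v u) \<longleftrightarrow>
      (\<forall>w<n. \<exists>u\<in>D. cycle_adj n (Suc w mod n) u)"
    using bij_betw_ball[OF bij_betw_Suc_mod[of n]] by (simp add: lessThan_iff Ball_def)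
  also have "\<dots> \<longleftrightarrow> (\<forall>w<n. w \<in> D \<or> (w + 2) mod n \<in> D)"
  proof -
    have "(\<exists>u\<in>D. Suc u mod n = Suc w mod n) \<longleftrightarrow> w \<in> D" if "w < n" for w
      using True that inj_onD[OF bij_betw_imp_inj_on[OF bij_betw_Suc_mod[of n]]] by blast
    then show ?thesis using neighbour assms by (auto simp: mod_Suc_eq)
  qed
  finally show ?thesis
    using True
    by (simp add: total_dominating_set_def two_step_cover_def cycle_verts_def atLeast0LessThan
        lessThan_iff Ball_def)
qed (auto simp: total_dominating_set_def two_step_cover_def cycle_verts_def)

lemma num_min_tds_eq_card:
  assumes "\<And>D. total_dominating_set V E D \<Longrightarrow> k \<le> card D"
    and "{D. total_dominating_set V E D \<and> card D = k} \<noteq> {}"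
  shows "num_min_tds V E = card {D. total_dominating_set V E D \<and> card D = k}"
proof -
  have "total_domination_number V E = k"
    unfolding total_domination_number_def by (rule Least_equality) (use assms in auto)
  then show ?thesis by (simp add: num_min_tds_def min_tds_def)
qed

lemma num_min_tds_cycle_eq_card:
  assumes "0 < n" "\<And>D. two_step_cover n {..<n} D \<Longrightarrow> k \<le> card D"
    and "0 < card {D. two_step_cover n {..<n} D \<and> card D = k}"
  shows "num_min_tds (cycle_verts n) (cycle_adj n) = card {D. two_step_cover n {..<n} D \<and> card D = k}"
  using num_min_tds_eq_card[of "cycle_verts n" "cycle_adj n" k] assms
  by (auto simp: total_dominating_set_cycle_iff card_gt_0_iff)

lemma bij_betw_double_mod:
  fixes n :: nat
  assumes "odd n"
  shows "bij_betw (\<lambda>i. 2 * i mod n) {..<n} {..<n}"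
proof (rule bij_betw_byWitness[where f' = "\<lambda>u. if even u then u div 2 else (u + n) div 2"])
  have "0 < n" using assms by (rule odd_pos)
  show "\<forall>i\<in>{..<n}. (if even (2 * i mod n) then 2 * i mod n div 2 else (2 * i mod n + n) div 2) = i"
  proof
    fix i assume "i \<in> {..<n}"
    then have "2 * i mod n = (if 2 * i < n then 2 * i else 2 * i - n)"
      by (simp add: mod_if)
    then show "(if even (2 * i mod n) then 2 * i mod n div 2 else (2 * i mod n + n) div 2) = i"
      using assms by auto
  qed
  show "\<forall>u\<in>{..<n}. 2 * (if even u then u div 2 else (u + n) div 2) mod n = u"
    using assms by auto
  show "(\<lambda>i. 2 * i mod n) ` {..<n} \<subseteq> {..<n}" using \<open>0 < n\<close> by auto
  show "(\<lambda>u. if even u then u div 2 else (u + n) div 2) ` {..<n} \<subseteq> {..<n}" by auto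
qed

lemma num_min_tds_cycle_odd:
  assumes "odd n"
  shows "num_min_tds (cycle_verts n) (cycle_adj n) = n"
proof -
  have "0 < n" using assms by (rule odd_pos)
  note bij = bij_betw_double_mod[OF assms]
  have step: "2 * (Suc i mod n) mod n = (2 * i mod n + 2) mod n" for i
    by (simp add: mod_simps)
  have count: "card {D. two_step_cover n {..<n} D \<and> card D = (n + 1) div 2} = n"
    using card_min_two_step_covers[OF bij step \<open>0 < n\<close>] assms by simp
  show ?thesis
    using num_min_tds_cycle_eq_card[OF \<open>0 < n\<close> two_step_cover_card_ge[OF bij step]] count \<open>0 < n\<close>
    by simp
qed

lemma num_min_tds_cycle_even:
  assumes "0 < m"
  shows "num_min_tds (cycle_verts (2 * m)) (cycle_adj (2 * m)) = (if even m then 2 else m)\<^sup>2"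
proof -
  define n where "n = 2 * m"
  define A where "A r = (\<lambda>i. 2 * i + r) ` {..<m}" for r :: nat
  define k where "k = (m + 1) div 2"
  have bij: "bij_betw (\<lambda>i. 2 * i + r) {..<m} (A r)" for r
    unfolding A_def by (rule bij_betw_imageI) (auto simp: inj_on_def)
  \<comment> \<open>The literal \<open>+ 0\<close> keeps \<open>step0\<close> in the shape of the orbit hypothesis for \<open>r = 0\<close>.\<close>
  have step0: "2 * (Suc i mod m) + 0 = (2 * i + 0 + 2) mod n"
    and step1: "2 * (Suc i mod m) + 1 = (2 * i + 1 + 2) mod n" for i
    by (simp_all add: n_def mod_mult2_eq)
  have disj: "A 0 \<inter> A 1 = {}"
    by (auto simp: A_def dest: arg_cong[where f = even])
  have parts: "{..<n} = A 0 \<union> A 1"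
  proof (intro equalityI subsetI)
    fix u assume "u \<in> {..<n}"
    then have "u = 2 * (u div 2) + u mod 2" "u div 2 < m" by (auto simp: n_def)
    then have "u \<in> A (u mod 2)" unfolding A_def by blast
    moreover have "u mod 2 = 0 \<or> u mod 2 = 1" by presburger
    ultimately show "u \<in> A 0 \<union> A 1" by auto
  qed (auto simp: A_def n_def)
  have bound: "k + k \<le> card D" if "two_step_cover n {..<n} D" for D
    using two_step_cover_Un_card_ge[OF bij[of 0] step0 bij[of 1] step1 disj, of D] that parts
    unfolding k_def by simp
  have "card {D. two_step_cover n {..<n} D \<and> card D = k + k} = (if even m then 2 else m)\<^sup>2"
    using card_min_two_step_covers_Un[OF bij[of 0] step0 bij[of 1] step1 disj assms assms]
    unfolding parts k_def power2_eq_square .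
  then show ?thesis
    using num_min_tds_cycle_eq_card[of n "k + k", OF _ bound] assms by (simp add: n_def)
qed

theorem theorem4p1:
  fixes n :: nat
  assumes "n \<ge> 3"
  shows "num_min_tds (cycle_verts n) (cycle_adj n) =
           (if n mod 4 = 0 then 4
            else if n mod 4 = 1 \<or> n mod 4 = 3 then n
            else (n div 2)^2)"
proof (cases "even n")
  case True
  then obtain m where n: "n = 2 * m" and "0 < m"
    using assms by (metis evenE gr0I mult_0_right not_numeral_le_zero)
  have "even m \<longleftrightarrow> n mod 4 = 0" and "n mod 4 \<noteq> 1 \<and> n mod 4 \<noteq> 3" using n by presburger+
  then show ?thesis using num_min_tds_cycle_even[OF \<open>0 < m\<close>] n by auto
next
  case False
  then have "n mod 4 = 1 \<or> n mod 4 = 3" by presburger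
  then show ?thesis using num_min_tds_cycle_odd[OF False] by auto
qed

end
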